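(* For $\lambda,\mu\in\mathfrak a^*_{\mathbb C}$ let $d_{\lambda,\mu}:G\to\mathbb C$, $d_{\lambda,\mu}(g)=e^{(i\lambda+\rho)H(g)}e^{(i\mu+\rho)H(gw)}$. Then for all $\gamma,g\in G$, $$d_{\lambda,\mu}(\gamma g)=e^{(i\lambda+\rho)\langle\gamma\cdot o,\,\gamma g\cdot eM\rangle}\,e^{(i\mu+\rho)\langle\gamma\cdot o,\,\gamma g\cdot wM\rangle}\,d_{\lambda,\mu}(g).$$
   Context: $G$ is a connected noncompact real semisimple Lie group with finite center, $K$ maximal compact, $X=G/K$, $o=eK$; Iwasawa decomposition $g=k(g)\exp(H(g))n(g)$ with $H(g)\in\mathfrak a$; $M=Z_K(A)$, $M'=N_K(A)$, and $w\in M'$ a representative of the longest Weyl group element; $B=K/M$ with $G$-action $g\cdot kM=k(gk)M$; $\rho$ half the sum of positive restricted roots with multiplicities; horocycle bracket $\langle gK,kM\rangle=-H(g^{-1}k)\in\mathfrak a$; expressions like $(i\lambda+\rho)H(g)$ mean $(i\lambda+\rho)(H(g))$. *)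

theory Defs
  imports "HOL-Analysis.Analysis" "HOL-Algebra.Group"
begin

text \<open>Abstract Iwasawa data G = K exp(a) N: G a group, K and N subgroups,
  E : a -> G the exponential map onto A (an injective homomorphism from the
  additive group of the real vector space a), A normalises N, and every g in G
  has a unique decomposition g = k exp(X) n.\<close>

definition iwasawa_data ::
  "('g, 'b) monoid_scheme \<Rightarrow> 'g set \<Rightarrow> 'g set \<Rightarrow> ('a::real_vector \<Rightarrow> 'g) \<Rightarrow> bool" where
  "iwasawa_data G K N E \<longleftrightarrow>
     group G \<and> subgroup K G \<and> subgroup N G \<and>
     (\<forall>X. E X \<in> carrier G) \<and> E 0 = \<one>\<^bsub>G\<^esub> \<and>
     (\<forall>X Y. E (X + Y) = E X \<otimes>\<^bsub>G\<^esub> E Y) \<and> inj E \<and>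
     (\<forall>X. \<forall>n\<in>N. E X \<otimes>\<^bsub>G\<^esub> n \<otimes>\<^bsub>G\<^esub> inv\<^bsub>G\<^esub> (E X) \<in> N) \<and>
     (\<forall>g\<in>carrier G. \<exists>!(k, X, n). k \<in> K \<and> n \<in> N \<and> g = k \<otimes>\<^bsub>G\<^esub> E X \<otimes>\<^bsub>G\<^esub> n)"

definition iw_kan ::
  "('g, 'b) monoid_scheme \<Rightarrow> 'g set \<Rightarrow> 'g set \<Rightarrow> ('a::real_vector \<Rightarrow> 'g) \<Rightarrow> 'g \<Rightarrow> 'g \<times> 'a \<times> 'g" where
  "iw_kan G K N E g = (THE (k, X, n). k \<in> K \<and> n \<in> N \<and> g = k \<otimes>\<^bsub>G\<^esub> E X \<otimes>\<^bsub>G\<^esub> n)"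

definition iw_k where "iw_k G K N E g = fst (iw_kan G K N E g)"
definition iw_H where "iw_H G K N E g = fst (snd (iw_kan G K N E g))"

text \<open>Horocycle bracket <gK, kM> = - H(g^{-1} k), on representatives g, k.\<close>
definition horo where
  "horo G K N E g k = - iw_H G K N E (inv\<^bsub>G\<^esub> g \<otimes>\<^bsub>G\<^esub> k)"

text \<open>Action of G on B = K/M on representatives: g . kM = k(gk) M.\<close>
definition act_B where
  "act_B G K N E g k = iw_k G K N E (g \<otimes>\<^bsub>G\<^esub> k)"

text \<open>e^{(i nu + rho)(X)} for nu in a*_C (complex-valued real-linear) and rho in a*.\<close>
definition expf :: "('a \<Rightarrow> complex) \<Rightarrow> ('a \<Rightarrow> real) \<Rightarrow> 'a \<Rightarrow> complex" where
  "expf nu \<rho> X = exp (\<i> * nu X + complex_of_real (\<rho> X))"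

definition d_fun where
  "d_fun G K N E w \<rho> la mu g =
     expf la \<rho> (iw_H G K N E g) * expf mu \<rho> (iw_H G K N E (g \<otimes>\<^bsub>G\<^esub> w))"

end

theory Submission
  imports Defs
begin

text \<open>Writing g = k(g) exp(H(g)) n(g), the map H satisfies the cocycle identity
  H(xy) = H(x k(y)) + H(y): decompose x k(y) and move exp(H(y)) to the left past the
  N-part, which A normalises. With x = \<gamma>^-1 and y = \<gamma>g this reads
  H(\<gamma>g) = <\<gamma>o, \<gamma>g.eM> + H(g), and likewise with gw in place of g. Since
  X \<mapsto> e^((i\<nu>+\<rho>)X) turns sums into products for linear \<nu> and \<rho>, both factors
  of d transform as claimed.\<close>

definition iw_n where "iw_n G K N E g = snd (snd (iw_kan G K N E g))"

lemma iwasawa_dataD: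
  assumes "iwasawa_data G K N E"
  shows "group G" "subgroup K G" "subgroup N G" "E X \<in> carrier G" "E 0 = \<one>\<^bsub>G\<^esub>"
    "E (X + Y) = E X \<otimes>\<^bsub>G\<^esub> E Y"
    "n \<in> N \<Longrightarrow> E X \<otimes>\<^bsub>G\<^esub> n \<otimes>\<^bsub>G\<^esub> inv\<^bsub>G\<^esub> (E X) \<in> N"
    "g \<in> carrier G \<Longrightarrow> \<exists>!(k, X, n). k \<in> K \<and> n \<in> N \<and> g = k \<otimes>\<^bsub>G\<^esub> E X \<otimes>\<^bsub>G\<^esub> n"
  using assms by (auto simp: iwasawa_data_def)

lemma iw_kan_eqI:
  assumes D: "iwasawa_data G K N E" and k: "k \<in> K" and n: "n \<in> N"
    and g: "g = k \<otimes>\<^bsub>G\<^esub> E X \<otimes>\<^bsub>G\<^esub> n"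
  shows "iw_kan G K N E g = (k, X, n)"
proof -
  interpret group G using iwasawa_dataD(1)[OF D] .
  have "g \<in> carrier G"
    using g subgroup.mem_carrier[OF iwasawa_dataD(2)[OF D] k]
      subgroup.mem_carrier[OF iwasawa_dataD(3)[OF D] n] iwasawa_dataD(4)[OF D] by simp
  then show ?thesis unfolding iw_kan_def
    by (rule the1_equality[OF iwasawa_dataD(8)[OF D]]) (use k n g in simp)
qed

lemma iw_decomposition:
  assumes D: "iwasawa_data G K N E" and g: "g \<in> carrier G"
  shows "iw_k G K N E g \<in> K" "iw_n G K N E g \<in> N"
    "g = iw_k G K N E g \<otimes>\<^bsub>G\<^esub> E (iw_H G K N E g) \<otimes>\<^bsub>G\<^esub> iw_n G K N E g"
proof -
  have "(\<lambda>(k, X, n). k \<in> K \<and> n \<in> N \<and> g = k \<otimes>\<^bsub>G\<^esub> E X \<otimes>\<^bsub>G\<^esub> n) (iw_kan G K N E g)"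
    unfolding iw_kan_def by (rule theI'[OF iwasawa_dataD(8)[OF D g]])
  then show "iw_k G K N E g \<in> K" "iw_n G K N E g \<in> N"
    "g = iw_k G K N E g \<otimes>\<^bsub>G\<^esub> E (iw_H G K N E g) \<otimes>\<^bsub>G\<^esub> iw_n G K N E g"
    unfolding iw_k_def iw_H_def iw_n_def by (auto split: prod.splits)
qed

lemma N_mult_E_eq_E_mult_N:
  assumes D: "iwasawa_data G K N E" and n: "n \<in> N"
  obtains m where "m \<in> N" "n \<otimes>\<^bsub>G\<^esub> E X = E X \<otimes>\<^bsub>G\<^esub> m"
proof
  interpret group G using iwasawa_dataD(1)[OF D] .
  let ?m = "E (-X) \<otimes>\<^bsub>G\<^esub> n \<otimes>\<^bsub>G\<^esub> inv\<^bsub>G\<^esub> (E (-X))"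
  show "?m \<in> N" using iwasawa_dataD(7)[OF D n] .
  have EC: "\<And>Y. E Y \<in> carrier G" and nc: "n \<in> carrier G"
    using iwasawa_dataD(4)[OF D] subgroup.mem_carrier[OF iwasawa_dataD(3)[OF D] n] by auto
  have inverse: "E X \<otimes>\<^bsub>G\<^esub> E (-X) = \<one>\<^bsub>G\<^esub>"
    using iwasawa_dataD(5)[OF D] iwasawa_dataD(6)[OF D, of X "-X"] by simp
  then have "inv\<^bsub>G\<^esub> (E (-X)) = E X"
    by (rule inv_equality[OF _ EC EC])
  then have "E X \<otimes>\<^bsub>G\<^esub> ?m = (E X \<otimes>\<^bsub>G\<^esub> E (-X)) \<otimes>\<^bsub>G\<^esub> (n \<otimes>\<^bsub>G\<^esub> E X)"
    using EC nc by (simp add: m_assoc)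
  then show "n \<otimes>\<^bsub>G\<^esub> E X = E X \<otimes>\<^bsub>G\<^esub> ?m"
    using inverse EC nc by simp
qed

lemma iw_H_mult:
  assumes D: "iwasawa_data G K N E" and x: "x \<in> carrier G" and y: "y \<in> carrier G"
  shows "iw_H G K N E (x \<otimes>\<^bsub>G\<^esub> y) = iw_H G K N E (x \<otimes>\<^bsub>G\<^esub> iw_k G K N E y) + iw_H G K N E y"
proof -
  interpret group G using iwasawa_dataD(1)[OF D] .
  note sK = iwasawa_dataD(2)[OF D] and sN = iwasawa_dataD(3)[OF D]
    and EC = iwasawa_dataD(4)[OF D]
  define k A n where "k = iw_k G K N E y" "A = iw_H G K N E y" "n = iw_n G K N E y"
  have k: "k \<in> K" and n: "n \<in> N" and y_eq: "y = k \<otimes>\<^bsub>G\<^esub> E A \<otimes>\<^bsub>G\<^esub> n"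
    using iw_decomposition[OF D y] unfolding k_A_n_def by auto
  have kc: "k \<in> carrier G" using subgroup.mem_carrier[OF sK k] .
  have xk: "x \<otimes>\<^bsub>G\<^esub> k \<in> carrier G" using x kc by simp
  define k' A' n' where "k' = iw_k G K N E (x \<otimes>\<^bsub>G\<^esub> k)" "A' = iw_H G K N E (x \<otimes>\<^bsub>G\<^esub> k)"
    "n' = iw_n G K N E (x \<otimes>\<^bsub>G\<^esub> k)"
  have k': "k' \<in> K" and n': "n' \<in> N" and xk_eq: "x \<otimes>\<^bsub>G\<^esub> k = k' \<otimes>\<^bsub>G\<^esub> E A' \<otimes>\<^bsub>G\<^esub> n'"
    using iw_decomposition[OF D xk] unfolding k'_A'_n'_def by auto
  obtain m where m: "m \<in> N" and swap: "n' \<otimes>\<^bsub>G\<^esub> E A = E A \<otimes>\<^bsub>G\<^esub> m"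
    using N_mult_E_eq_E_mult_N[OF D n'] .
  have carr: "k' \<in> carrier G" "n' \<in> carrier G" "m \<in> carrier G" "n \<in> carrier G"
    using k' n' m n subgroup.mem_carrier[OF sK] subgroup.mem_carrier[OF sN] by auto
  have "x \<otimes>\<^bsub>G\<^esub> y = (x \<otimes>\<^bsub>G\<^esub> k) \<otimes>\<^bsub>G\<^esub> E A \<otimes>\<^bsub>G\<^esub> n"
    using y_eq x kc carr EC by (simp add: m_assoc)
  also have "\<dots> = k' \<otimes>\<^bsub>G\<^esub> E A' \<otimes>\<^bsub>G\<^esub> (n' \<otimes>\<^bsub>G\<^esub> E A) \<otimes>\<^bsub>G\<^esub> n"
    using xk_eq carr EC by (simp add: m_assoc)
  also have "\<dots> = k' \<otimes>\<^bsub>G\<^esub> E (A' + A) \<otimes>\<^bsub>G\<^esub> (m \<otimes>\<^bsub>G\<^esub> n)"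
    unfolding swap iwasawa_dataD(6)[OF D] using carr EC by (simp add: m_assoc)
  finally have "iw_kan G K N E (x \<otimes>\<^bsub>G\<^esub> y) = (k', A' + A, m \<otimes>\<^bsub>G\<^esub> n)"
    using iw_kan_eqI[OF D k' subgroup.m_closed[OF sN m n]] by blast
  then show ?thesis
    using k_A_n_def k'_A'_n'_def by (simp add: iw_H_def)
qed

lemma iw_H_mult_horo:
  assumes D: "iwasawa_data G K N E" and \<gamma>: "\<gamma> \<in> carrier G" and g: "g \<in> carrier G"
  shows "iw_H G K N E (\<gamma> \<otimes>\<^bsub>G\<^esub> g) = horo G K N E \<gamma> (iw_k G K N E (\<gamma> \<otimes>\<^bsub>G\<^esub> g)) + iw_H G K N E g"
proof -
  interpret group G using iwasawa_dataD(1)[OF D] .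
  have "iw_H G K N E g = iw_H G K N E (inv\<^bsub>G\<^esub> \<gamma> \<otimes>\<^bsub>G\<^esub> (\<gamma> \<otimes>\<^bsub>G\<^esub> g))"
    using \<gamma> g by (simp add: m_assoc[symmetric])
  also have "\<dots> = iw_H G K N E (inv\<^bsub>G\<^esub> \<gamma> \<otimes>\<^bsub>G\<^esub> iw_k G K N E (\<gamma> \<otimes>\<^bsub>G\<^esub> g)) + iw_H G K N E (\<gamma> \<otimes>\<^bsub>G\<^esub> g)"
    using iw_H_mult[OF D] \<gamma> g by simp
  finally show ?thesis unfolding horo_def by (simp add: algebra_simps)
qed

lemma expf_add:
  assumes "linear \<rho>" "linear \<nu>"
  shows "expf \<nu> \<rho> (X + Y) = expf \<nu> \<rho> X * expf \<nu> \<rho> Y"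
  using assms by (simp add: expf_def linear_add exp_add[symmetric] algebra_simps)

theorem mainTheorem11:
  fixes G :: "('g, 'b) monoid_scheme" and K N :: "'g set"
    and E :: "'a::euclidean_space \<Rightarrow> 'g" and w \<gamma> g :: 'g
    and \<rho> :: "'a \<Rightarrow> real" and la mu :: "'a \<Rightarrow> complex"
  assumes "iwasawa_data G K N E"
    and "w \<in> K" and "\<forall>X. w \<otimes>\<^bsub>G\<^esub> E X \<otimes>\<^bsub>G\<^esub> inv\<^bsub>G\<^esub> w \<in> range E"
    and "linear \<rho>" and "linear la" and "linear mu"
    and "\<gamma> \<in> carrier G" and "g \<in> carrier G"
  shows "d_fun G K N E w \<rho> la mu (\<gamma> \<otimes>\<^bsub>G\<^esub> g) =
    expf la \<rho> (horo G K N E \<gamma> (act_B G K N E (\<gamma> \<otimes>\<^bsub>G\<^esub> g) \<one>\<^bsub>G\<^esub>))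
    * expf mu \<rho> (horo G K N E \<gamma> (act_B G K N E (\<gamma> \<otimes>\<^bsub>G\<^esub> g) w))
    * d_fun G K N E w \<rho> la mu g"
proof -
  note D = assms(1) and \<gamma> = assms(7) and g = assms(8)
  interpret group G using iwasawa_dataD(1)[OF D] .
  have w: "w \<in> carrier G" using subgroup.mem_carrier[OF iwasawa_dataD(2)[OF D] assms(2)] .
  have act_one: "act_B G K N E (\<gamma> \<otimes>\<^bsub>G\<^esub> g) \<one>\<^bsub>G\<^esub> = iw_k G K N E (\<gamma> \<otimes>\<^bsub>G\<^esub> g)"
    using \<gamma> g by (simp add: act_B_def)
  have act_w: "act_B G K N E (\<gamma> \<otimes>\<^bsub>G\<^esub> g) w = iw_k G K N E (\<gamma> \<otimes>\<^bsub>G\<^esub> (g \<otimes>\<^bsub>G\<^esub> w))"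
    using \<gamma> g w by (simp add: act_B_def m_assoc)
  have assoc: "\<gamma> \<otimes>\<^bsub>G\<^esub> g \<otimes>\<^bsub>G\<^esub> w = \<gamma> \<otimes>\<^bsub>G\<^esub> (g \<otimes>\<^bsub>G\<^esub> w)"
    using \<gamma> g w by (simp add: m_assoc)
  show ?thesis
    unfolding d_fun_def act_one act_w assoc
    using iw_H_mult_horo[OF D \<gamma> g] iw_H_mult_horo[OF D \<gamma>, of "g \<otimes>\<^bsub>G\<^esub> w"] g w
      expf_add[OF assms(4,5)] expf_add[OF assms(4,6)]
    by (simp add: algebra_simps)
qed

end
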